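(* Let $A=J(\lambda,n)\in\mathrm{SL}(n,\mathbb{C})$ be a single Jordan block with $|\lambda|=1$. For $b\in\mathbb{C}$ with $|b|=1$, let $B=[b_{i,j}]_{1\le i,j\le n}$ be defined by $b_{i,j}=0$ if $j<i$; $b_{i,j}=(-1)^{j+1}\binom{j-2}{i-2}\dfrac{b}{\lambda^{i+j-2}}$ if $j\ge i$ and $i>1$; $b_{1,1}=b$; and $b_{1,j}=0$ for $2\le j\le n$. Then for a suitable choice of $b$ with $|b|=1$, the matrix $B$ lies in $\mathrm{SL}(n,\mathbb{C})$, satisfies $B\overline{B}=I$, and $BAB^{-1}=\overline{A}^{-1}$; that is, $B$ is a strong $c$-reverser of $A$.
   Context: $J(\lambda,n)$ is the $n\times n$ Jordan block with $\lambda$ on the diagonal and $1$ on the superdiagonal. $\overline{g}$ denotes entrywise complex conjugation. *)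

theory Defs
  imports "Jordan_Normal_Form.Jordan_Normal_Form" "Jordan_Normal_Form.Determinant"
begin

(* Matrix indices are 0-based here: entry (i,j) corresponds to the paper's (i+1,j+1). *)

definition conj_mat :: "complex mat \<Rightarrow> complex mat" where
  "conj_mat M = map_mat cnj M"

definition minv :: "complex mat \<Rightarrow> complex mat" where
  "minv M = (SOME N. inverts_mat M N \<and> inverts_mat N M)"

definition reverserB :: "nat \<Rightarrow> complex \<Rightarrow> complex \<Rightarrow> complex mat" where
  "reverserB n lam b = mat n n (\<lambda>(i,j).
     if j < i then 0
     else if i = 0 then (if j = 0 then b else 0)
     else (-1) ^ (j + 2) * of_nat ((j - 1) choose (i - 1)) * b / lam ^ (i + j))"

end

theory Submission
  imports Defs
begin

(* Since cmod lam = 1, conj J(lam,n) = J(1/lam,n).  Away from its corner entry b, the matrix B is,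
   up to sign and the factors lam^-(i+j), b times the signed Pascal matrix [(-1)^j C(j,i)].  Entrywise,
   conj(J) B J = B is then Pascal's rule, and B conj(B) = I is the fact that the signed Pascal
   matrix is an involution, i.e. sum_m (-1)^m C(m,r) C(N,m) = (-1)^r [N = r].  The latter gives
   B^-1 = conj(B), and the former then rearranges to B J B^-1 = conj(J)^-1.  Finally B is upper
   triangular with unimodular diagonal, so det B = b^n u with |u| = 1, and b := an n-th root of
   1/u makes det B = 1. *)

lemma conj_mat_dims [simp]:
  "dim_row (conj_mat M) = dim_row M" "dim_col (conj_mat M) = dim_col M"
  unfolding conj_mat_def by simp_all

lemma conj_mat_index [simp]:
  "i < dim_row M \<Longrightarrow> j < dim_col M \<Longrightarrow> conj_mat M $$ (i, j) = cnj (M $$ (i, j))"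
  unfolding conj_mat_def by simp

lemma conj_mat_carrier [simp]: "conj_mat M \<in> carrier_mat n m \<longleftrightarrow> M \<in> carrier_mat n m"
  unfolding carrier_mat_def by simp

lemma conj_mat_jordan_block: "conj_mat (jordan_block n a) = jordan_block n (cnj a)"
  by (rule eq_matI) auto

lemma jordan_block_mult_index:
  fixes A :: "'a :: semiring_1 mat"
  assumes "A \<in> carrier_mat n m" "i < n" "j < m"
  shows "(jordan_block n a * A) $$ (i, j) = a * A $$ (i, j) + (if Suc i < n then A $$ (Suc i, j) else 0)"
proof -
  have "(jordan_block n a * A) $$ (i, j)
      = (\<Sum>k\<in>{0..<n}. (if k = i then a * A $$ (i, j) else 0) + (if k = Suc i then A $$ (Suc i, j) else 0))"
    using assms by (auto simp: scalar_prod_def intro!: sum.cong)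
  then show ?thesis
    using assms by (simp add: sum.distrib)
qed

lemma mult_jordan_block_index:
  fixes A :: "'a :: semiring_1 mat"
  assumes "A \<in> carrier_mat m n" "i < m" "j < n"
  shows "(A * jordan_block n a) $$ (i, j) = A $$ (i, j) * a + (if 0 < j then A $$ (i, j - 1) else 0)"
proof -
  have "(A * jordan_block n a) $$ (i, j)
      = (\<Sum>k\<in>{0..<n}. (if k = j then A $$ (i, j) * a else 0) + (if 0 < j \<and> k = j - 1 then A $$ (i, j - 1) else 0))"
    using assms by (auto simp: scalar_prod_def intro!: sum.cong)
  then show ?thesis
    using assms by (cases j) (simp_all add: sum.distrib)
qed

lemma minv_eqI:
  assumes M: "M \<in> carrier_mat n n" and N: "N \<in> carrier_mat n n" and MN: "M * N = 1\<^sub>m n"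
  shows "minv M = N"
proof -
  have "inverts_mat M N \<and> inverts_mat N M"
    using mat_mult_left_right_inverse[OF M N MN] M N MN by (simp add: inverts_mat_def)
  then have "inverts_mat M (minv M) \<and> inverts_mat (minv M) M"
    unfolding minv_def by (rule someI)
  then have left: "minv M * M = 1\<^sub>m (dim_row (minv M))" and right: "M * minv M = 1\<^sub>m n"
    using M by (auto simp: inverts_mat_def)
  have "dim_row (minv M) = n" "dim_col (minv M) = n"
    using arg_cong[OF left, of dim_col] arg_cong[OF right, of dim_col] M by auto
  then have "minv M \<in> carrier_mat n n" by blast
  then have "minv M = minv M * (M * N)" by (simp add: MN)
  also have "\<dots> = N"
    using \<open>minv M \<in> carrier_mat n n\<close> M N left by (simp add: assoc_mult_mat[symmetric])
  finally show ?thesis .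
qed

lemma minv_eq_conj_mat:
  assumes "B \<in> carrier_mat n n" "B * conj_mat B = 1\<^sub>m n"
  shows "minv B = conj_mat B"
  using minv_eqI[OF assms(1) _ assms(2)] assms(1) by simp

lemma conjugate_eq_minv_conj_mat:
  assumes B: "B \<in> carrier_mat n n" and J: "J \<in> carrier_mat n n"
    and unitary: "B * conj_mat B = 1\<^sub>m n" and reverses: "conj_mat J * B * J = B"
  shows "B * J * minv B = minv (conj_mat J)"
proof -
  have "conj_mat J * (B * J * conj_mat B) = (conj_mat J * B * J) * conj_mat B"
    using B J by (simp add: assoc_mult_mat[of _ n n _ n _ n])
  also have "\<dots> = 1\<^sub>m n"
    by (simp add: reverses unitary)
  finally have "minv (conj_mat J) = B * J * conj_mat B"
    using B J by (intro minv_eqI[of _ n]) auto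
  then show ?thesis
    using minv_eq_conj_mat[OF B unitary] by simp
qed

lemma cnj_eq_one_div_if_norm_eq_1: "cmod z = 1 \<Longrightarrow> cnj z = 1 / z"
  using complex_norm_square[of z] by (auto simp: eq_divide_eq mult.commute)

(* The entries of reverserB n lam 1.  Below the first row they are the paper's
   (-1)^(j+1) C(j-2,i-2) / lam^(i+j-2) (1-based); the binomial coefficient already
   vanishes below the diagonal, so no case distinction on j < i is needed. *)
fun reverser_entry :: "complex \<Rightarrow> nat \<Rightarrow> nat \<Rightarrow> complex" where
  "reverser_entry lam 0 j = (if j = 0 then 1 else 0)"
| "reverser_entry lam (Suc i) 0 = 0"
| "reverser_entry lam (Suc i) (Suc j) = - ((-1) ^ j * of_nat (j choose i) / lam ^ (i + j + 2))"

lemma reverser_entry_below_diag: "j < i \<Longrightarrow> reverser_entry lam i j = 0"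
  by (cases i; cases j) auto

lemma reverserB_dims [simp]:
  "dim_row (reverserB n lam b) = n" "dim_col (reverserB n lam b) = n"
  unfolding reverserB_def by simp_all

lemma reverserB_carrier [simp]: "reverserB n lam b \<in> carrier_mat n n"
  by (simp add: carrier_matI)

lemma reverserB_index:
  "i < n \<Longrightarrow> j < n \<Longrightarrow> reverserB n lam b $$ (i, j) = b * reverser_entry lam i j"
  unfolding reverserB_def by (cases i; cases j) auto

lemma reverser_entry_recurrence:
  assumes "lam \<noteq> 0"
  shows "lam * reverser_entry lam (Suc i) (Suc j) + reverser_entry lam i j / lam
    + reverser_entry lam (Suc i) j = 0"
proof (cases i; cases j)
  fix i' j' assume "i = Suc i'" "j = Suc j'"
  then show ?thesis
    using assms by (simp add: field_simps power_add)
qed (use assms in \<open>auto simp: field_simps\<close>)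

lemma norm_reverser_entry_diag: "cmod lam = 1 \<Longrightarrow> cmod (reverser_entry lam i i) = 1"
  by (cases i) (auto simp: norm_divide norm_power norm_mult)

lemma sum_alternating_choose_mult_choose:
  "(\<Sum>m\<le>N. (-1) ^ m * of_nat (m choose r) * of_nat (N choose m))
     = (if N = r then (-1) ^ r else 0 :: 'a :: comm_ring_1)"
proof (cases "r \<le> N")
  case True
  have "(\<Sum>m\<le>N. (-1) ^ m * of_nat (m choose r) * of_nat (N choose m) :: 'a)
      = (\<Sum>m=r..N. (-1) ^ m * (of_nat (N choose r) * of_nat ((N - r) choose (m - r))))"
  proof (rule sum.mono_neutral_cong_right)
    fix m assume "m \<in> {r..N}"
    then have "(m choose r) * (N choose m) = (N choose r) * ((N - r) choose (m - r))"
      by (subst mult.commute) (intro choose_mult, auto)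
    then have "of_nat (m choose r) * of_nat (N choose m)
             = (of_nat (N choose r) * of_nat ((N - r) choose (m - r)) :: 'a)"
      by (metis of_nat_mult)
    then show "(-1) ^ m * of_nat (m choose r) * of_nat (N choose m)
             = ((-1) ^ m * (of_nat (N choose r) * of_nat ((N - r) choose (m - r))) :: 'a)"
      by (simp add: mult.assoc)
  qed (auto simp: binomial_eq_0)
  also have "\<dots> = (\<Sum>t\<le>N - r. (-1) ^ (r + t) * (of_nat (N choose r) * of_nat ((N - r) choose t)))"
    unfolding sum.atLeastAtMost_shift_0[OF True] by (simp add: atLeast0AtMost)
  also have "\<dots> = (-1) ^ r * of_nat (N choose r) * (\<Sum>t\<le>N - r. (-1) ^ t * of_nat ((N - r) choose t))"
    by (simp add: sum_distrib_left power_add mult_ac)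
  also have "\<dots> = (if N = r then (-1) ^ r else 0)"
    using choose_alternating_sum[of "N - r", where 'a = 'a] True by auto
  finally show ?thesis .
qed (simp add: binomial_eq_0)

lemma reverser_entry_mult_cnj:
  assumes "cmod lam = 1"
  shows "reverser_entry lam (Suc i) (Suc m) * cnj (reverser_entry lam (Suc m) (Suc k))
    = (-1) ^ (m + k) * of_nat (m choose i) * of_nat (k choose m) * lam ^ k / lam ^ i"
proof -
  have "lam \<noteq> 0" and cnj_lam: "cnj lam = 1 / lam"
    using assms cnj_eq_one_div_if_norm_eq_1 by auto
  have "cnj (reverser_entry lam (Suc m) (Suc k))
      = - ((-1) ^ k * of_nat (k choose m) / cnj lam ^ (m + k + 2))"
    by simp
  also have "\<dots> = - ((-1) ^ k * of_nat (k choose m) * lam ^ (m + k + 2))"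
    unfolding cnj_lam by (simp add: power_one_over)
  finally have cnj_entry: "cnj (reverser_entry lam (Suc m) (Suc k))
      = - ((-1) ^ k * of_nat (k choose m) * lam ^ (m + k + 2))" .
  show ?thesis
    unfolding cnj_entry using \<open>lam \<noteq> 0\<close> by (simp add: field_simps power_add)
qed

lemma sum_reverser_entry_mult_cnj:
  assumes lam: "cmod lam = 1" and "i < n" "k < n"
  shows "(\<Sum>j<n. reverser_entry lam i j * cnj (reverser_entry lam j k)) = (if i = k then 1 else 0)"
proof (cases i)
  case 0
  then have "(\<Sum>j<n. reverser_entry lam i j * cnj (reverser_entry lam j k))
      = (\<Sum>j<n. if j = 0 then cnj (reverser_entry lam 0 k) else 0)"
    by (intro sum.cong) auto
  then show ?thesis
    using 0 \<open>i < n\<close> by simp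
next
  case (Suc r)
  show ?thesis
  proof (cases k)
    case 0
    have vanish: "reverser_entry lam (Suc r) j * cnj (reverser_entry lam j 0) = 0" for j
      by (cases j) auto
    show ?thesis
      unfolding \<open>i = Suc r\<close> \<open>k = 0\<close> vanish by simp
  next
    case (Suc N)
    obtain n' where n': "n = Suc n'" "N < n'"
      using \<open>k < n\<close> Suc by (cases n) auto
    have "(\<Sum>j<n. reverser_entry lam i j * cnj (reverser_entry lam j k))
        = (\<Sum>m<n'. (-1) ^ (m + N) * of_nat (m choose r) * of_nat (N choose m) * lam ^ N / lam ^ r)"
      unfolding n' sum.lessThan_Suc_shift \<open>i = Suc r\<close> \<open>k = Suc N\<close> reverser_entry_mult_cnj[OF lam]
      by simp
    also have "\<dots> = (\<Sum>m\<le>N. (-1) ^ (m + N) * of_nat (m choose r) * of_nat (N choose m) * lam ^ N / lam ^ r)"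
      using n' by (intro sum.mono_neutral_right) (auto simp: binomial_eq_0)
    also have "\<dots> = (-1) ^ N * lam ^ N / lam ^ r * (\<Sum>m\<le>N. (-1) ^ m * of_nat (m choose r) * of_nat (N choose m))"
      by (simp add: sum_distrib_left power_add mult_ac)
    also have "\<dots> = (if i = k then 1 else 0)"
      using \<open>i = Suc r\<close> Suc lam
      by (auto simp: sum_alternating_choose_mult_choose simp flip: power_add)
    finally show ?thesis .
  qed
qed

lemma reverserB_mult_conj_mat:
  assumes "cmod lam = 1" "cmod b = 1"
  shows "reverserB n lam b * conj_mat (reverserB n lam b) = 1\<^sub>m n"
proof (rule eq_matI)
  fix i k assume "i < dim_row (1\<^sub>m n :: complex mat)" "k < dim_col (1\<^sub>m n :: complex mat)"
  then have "i < n" "k < n" by auto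
  have "b * cnj b = 1"
    using complex_norm_square[of b] assms(2) by simp
  have "(reverserB n lam b * conj_mat (reverserB n lam b)) $$ (i, k)
      = (\<Sum>j<n. b * cnj b * (reverser_entry lam i j * cnj (reverser_entry lam j k)))"
    using \<open>i < n\<close> \<open>k < n\<close>
    by (auto simp: scalar_prod_def reverserB_index atLeast0LessThan mult_ac intro!: sum.cong)
  also have "\<dots> = (\<Sum>j<n. reverser_entry lam i j * cnj (reverser_entry lam j k))"
    using \<open>b * cnj b = 1\<close> by simp
  finally show "(reverserB n lam b * conj_mat (reverserB n lam b)) $$ (i, k) = 1\<^sub>m n $$ (i, k)"
    using sum_reverser_entry_mult_cnj[OF assms(1) \<open>i < n\<close> \<open>k < n\<close>] \<open>i < n\<close> \<open>k < n\<close> by simp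
qed auto

lemma conj_jordan_block_mult_reverserB:
  assumes "cmod lam = 1"
  shows "conj_mat (jordan_block n lam) * reverserB n lam b * jordan_block n lam = reverserB n lam b"
proof (rule eq_matI)
  have "lam \<noteq> 0" and cnj_lam: "cnj lam = 1 / lam"
    using assms cnj_eq_one_div_if_norm_eq_1 by auto
  define X where "X = jordan_block n (cnj lam) * reverserB n lam b"
  have X: "X \<in> carrier_mat n n"
    unfolding X_def by (rule mult_carrier_mat[OF jordan_block_carrier reverserB_carrier])
  \<comment> \<open>The missing row n of B is harmless: reverser_entry lam n j = 0 for j < n.\<close>
  have X_index: "X $$ (i, j) = b * (reverser_entry lam i j / lam + reverser_entry lam (Suc i) j)"
    if "i < n" "j < n" for i j
    using that unfolding X_def jordan_block_mult_index[OF reverserB_carrier that]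
    by (auto simp: cnj_lam reverserB_index reverser_entry_below_diag algebra_simps)
  fix i j assume "i < dim_row (reverserB n lam b)" "j < dim_col (reverserB n lam b)"
  then have "i < n" "j < n" by auto
  have "(X * jordan_block n lam) $$ (i, j) = X $$ (i, j) * lam + (if 0 < j then X $$ (i, j - 1) else 0)"
    by (rule mult_jordan_block_index[OF X \<open>i < n\<close> \<open>j < n\<close>])
  also have "\<dots> = b * reverser_entry lam i j"
  proof (cases j)
    case 0
    then show ?thesis
      using \<open>i < n\<close> \<open>j < n\<close> \<open>lam \<noteq> 0\<close>
      by (simp add: X_index field_simps)
  next
    case (Suc j')
    have "X $$ (i, j) * lam + X $$ (i, j') = b * reverser_entry lam i j
        + b * (lam * reverser_entry lam (Suc i) (Suc j') + reverser_entry lam i j' / lam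
               + reverser_entry lam (Suc i) j')"
      using \<open>i < n\<close> \<open>j < n\<close> \<open>lam \<noteq> 0\<close> Suc
      by (simp add: X_index field_simps del: reverser_entry.simps)
    then show ?thesis
      using Suc by (simp add: reverser_entry_recurrence[OF \<open>lam \<noteq> 0\<close>] del: reverser_entry.simps)
  qed
  finally show "(conj_mat (jordan_block n lam) * reverserB n lam b * jordan_block n lam) $$ (i, j)
      = reverserB n lam b $$ (i, j)"
    using \<open>i < n\<close> \<open>j < n\<close> by (simp add: X_def conj_mat_jordan_block reverserB_index)
qed (simp_all add: conj_mat_jordan_block)

lemma det_reverserB: "det (reverserB n lam b) = b ^ n * (\<Prod>i<n. reverser_entry lam i i)"
proof -
  have "upper_triangular (reverserB n lam b)"
    by (intro upper_triangularI) (auto simp: reverserB_index reverser_entry_below_diag)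
  then have "det (reverserB n lam b) = (\<Prod>i<n. b * reverser_entry lam i i)"
    by (simp add: det_upper_triangular[OF _ reverserB_carrier] prod_list_diag_prod
        reverserB_index atLeast0LessThan)
  then show ?thesis
    by (simp add: prod.distrib)
qed

lemma unimodular_nth_root:
  assumes "cmod z = 1" "0 < n"
  obtains b where "cmod b = 1" "b ^ n = z"
proof
  show "cmod (cis (Arg z / n)) = 1" by simp
  show "cis (Arg z / n) ^ n = z"
    using assms rcis_cmod_Arg[of z] by (simp add: DeMoivre rcis_def)
qed

lemma exists_det_reverserB_eq_1:
  assumes "cmod lam = 1"
  obtains b where "cmod b = 1" "det (reverserB n lam b) = 1"
proof (cases "n = 0")
  case True
  then show ?thesis
    using that[of 1] by (simp add: det_reverserB)
next
  case False
  define q where "q = (\<Prod>i<n. reverser_entry lam i i)"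
  have "cmod q = 1"
    unfolding q_def prod_norm[symmetric] using norm_reverser_entry_diag[OF assms] by simp
  then obtain b where "cmod b = 1" "b ^ n = inverse q"
    using unimodular_nth_root[of "inverse q" n] False by (auto simp: norm_inverse)
  moreover have "q \<noteq> 0"
    using \<open>cmod q = 1\<close> by auto
  ultimately show ?thesis
    by (intro that[of b]) (simp_all add: det_reverserB flip: q_def)
qed

theorem lemma3p7:
  fixes n :: nat and lam :: complex
  assumes "cmod lam = 1"
    and "det (jordan_block n lam) = 1"
  shows "\<exists>b :: complex. cmod b = 1 \<and>
           det (reverserB n lam b) = 1 \<and>
           reverserB n lam b * conj_mat (reverserB n lam b) = 1\<^sub>m n \<and>
           reverserB n lam b * jordan_block n lam * minv (reverserB n lam b)
             = minv (conj_mat (jordan_block n lam))"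
proof -
  obtain b where b: "cmod b = 1" "det (reverserB n lam b) = 1"
    using exists_det_reverserB_eq_1[OF assms(1)] .
  have "reverserB n lam b * conj_mat (reverserB n lam b) = 1\<^sub>m n"
    using reverserB_mult_conj_mat[OF assms(1) b(1)] .
  moreover have "reverserB n lam b * jordan_block n lam * minv (reverserB n lam b)
      = minv (conj_mat (jordan_block n lam))"
    using conjugate_eq_minv_conj_mat[OF reverserB_carrier jordan_block_carrier calculation
        conj_jordan_block_mult_reverserB[OF assms(1)]] .
  ultimately show ?thesis
    using b by blast
qed

end
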